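(* Let $X \subset Y \subset \mathbb{R}^{n}$ be finite sets, let $k \geq 0$ be an integer, let $r > 0$ and $s \geq 0$. Suppose that $X^{k+1}_{dis}$ is $r$-dense in $Y^{k+1}_{dis}$ and that $L_{s,k}(Y) \neq \emptyset$. Then there is a simplicial map $\theta: L_{s,k}(Y) \to L_{s+2r,k}(X)$ such that, for the inclusions $j: L_{s,k}(X) \to L_{s+2r,k}(X)$, $j: L_{s,k}(Y) \to L_{s+2r,k}(Y)$ and $i: L_{s,k}(X) \to L_{s,k}(Y)$, $i: L_{s+2r,k}(X) \to L_{s+2r,k}(Y)$, one has $\theta \circ i = j$ (strict commutativity of the upper triangle), and $i \circ \theta$ is homotopic to $j: L_{s,k}(Y) \to L_{s+2r,k}(Y)$ after geometric realization.
   Context: $\mathbb{R}^n$ carries the Euclidean metric $d$. For subsets $A \subset B$ of a metric space and $r>0$, $A$ is $r$-dense in $B$ if for every $b \in B$ there is an $a \in A$ with $d(a,b) < r$. For a finite $X \subset \mathbb{R}^n$ and $s \ge 0$, $V_{s}(X)$ is the Vietoris–Rips complex: vertex set $X$, simplices the nonempty subsets $\{x_0,\dots,x_p\}$ with $d(x_i,x_j) \le s$ for all $i,j$. For an integer $k \geq 0$, the Lesnick complex $L_{s,k}(X)$ is the full subcomplex of $V_{s}(X)$ on the set of vertices $x \in X$ for which there exist at least $k$ points $x' \in X$, distinct from $x$, with $d(x,x') \leq s$. $X^{k+1}_{dis}$ denotes the set of ordered $(k+1)$-tuples of pairwise distinct points of $X$, regarded as a subset of $(\mathbb{R}^{n})^{k+1}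 = \mathbb{R}^{n(k+1)}$ with its Euclidean metric. *)

theory Defs
  imports "HOL-Analysis.Analysis"
begin

definition r_dense :: "real \<Rightarrow> 'b::metric_space set \<Rightarrow> 'b set \<Rightarrow> bool" where
  "r_dense r A B \<longleftrightarrow> (\<forall>b\<in>B. \<exists>a\<in>A. dist a b < r)"

text \<open>Ordered (k+1)-tuples of pairwise distinct points of X, represented as lists.\<close>
definition dis_tuples :: "'a set \<Rightarrow> nat \<Rightarrow> 'a list set" where
  "dis_tuples X k = {xs. length xs = k + 1 \<and> distinct xs \<and> set xs \<subseteq> X}"

definition tuple_dist :: "('a::metric_space) list \<Rightarrow> 'a list \<Rightarrow> real" where
  "tuple_dist xs ys = sqrt (\<Sum>i<length xs. (dist (xs!i) (ys!i))\<^sup>2)"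

definition r_dense_tuples :: "real \<Rightarrow> ('a::metric_space) list set \<Rightarrow> 'a list set \<Rightarrow> bool" where
  "r_dense_tuples r A B \<longleftrightarrow> (\<forall>b\<in>B. \<exists>a\<in>A. tuple_dist a b < r)"

text \<open>Simplicial complexes as sets of (nonempty finite) simplices.\<close>
definition vertices :: "'a set set \<Rightarrow> 'a set" where
  "vertices K = \<Union>K"

definition vietoris_rips :: "real \<Rightarrow> ('a::metric_space) set \<Rightarrow> 'a set set" where
  "vietoris_rips s X = {\<sigma>. \<sigma> \<noteq> {} \<and> \<sigma> \<subseteq> X \<and> (\<forall>x\<in>\<sigma>. \<forall>y\<in>\<sigma>. dist x y \<le> s)}"

definition lesnick_vertices :: "real \<Rightarrow> nat \<Rightarrow> ('a::metric_space) set \<Rightarrow> 'a set" where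
  "lesnick_vertices s k X = {x\<in>X. card {x'\<in>X. x' \<noteq> x \<and> dist x x' \<le> s} \<ge> k}"

definition lesnick :: "real \<Rightarrow> nat \<Rightarrow> ('a::metric_space) set \<Rightarrow> 'a set set" where
  "lesnick s k X = {\<sigma>\<in>vietoris_rips s X. \<sigma> \<subseteq> lesnick_vertices s k X}"

definition simplicial_map :: "'a set set \<Rightarrow> 'b set set \<Rightarrow> ('a \<Rightarrow> 'b) \<Rightarrow> bool" where
  "simplicial_map K L f \<longleftrightarrow> (\<forall>\<sigma>\<in>K. f ` \<sigma> \<in> L)"

text \<open>Geometric realization: barycentric-coordinate functions whose support is a simplex,
  with the subspace topology of the product topology on functions to R.\<close>
definition geom_carrier :: "'a set set \<Rightarrow> ('a \<Rightarrow> real) set" where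
  "geom_carrier K = {f. (\<forall>x. f x \<ge> 0) \<and> {x. f x \<noteq> 0} \<in> K \<and> sum f {x. f x \<noteq> 0} = 1}"

definition geom_real :: "'a set set \<Rightarrow> ('a \<Rightarrow> real) topology" where
  "geom_real K = subtopology (powertop_real UNIV) (geom_carrier K)"

text \<open>Affine extension of a vertex map (V = vertex set of the source complex).\<close>
definition real_map :: "'a set \<Rightarrow> ('a \<Rightarrow> 'b) \<Rightarrow> ('a \<Rightarrow> real) \<Rightarrow> ('b \<Rightarrow> real)" where
  "real_map V g f = (\<lambda>y. \<Sum>x\<in>{x\<in>V. g x = y}. f x)"

end

theory Submission
  imports Defs
begin

text \<open>
  Every vertex y of L_{s,k}(Y) has k neighbours within distance s; approximating the tuple
  formed by y and these neighbours by a distinct tuple of X within r gives a point of X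
  within r of y having k neighbours in X within s + 2r. Choosing such a point \<theta> y (with
  \<theta> y = y when y is already a vertex of L_{s,k}(X)) defines a simplicial map, and \<theta> is
  contiguous to the identity in L_{s+2r,k}(Y): every simplex together with its image still
  has diameter at most s + 2r. Contiguous vertex maps have homotopic realizations via the
  straight-line homotopy.
\<close>

lemma dist_nth_le_tuple_dist:
  assumes "i < length xs"
  shows "dist (xs!i) (ys!i) \<le> tuple_dist xs ys"
proof -
  have "(dist (xs!i) (ys!i))\<^sup>2 \<le> (\<Sum>j<length xs. (dist (xs!j) (ys!j))\<^sup>2)"
    using assms by (intro member_le_sum) auto
  then have "sqrt ((dist (xs!i) (ys!i))\<^sup>2) \<le> tuple_dist xs ys"
    unfolding tuple_dist_def by (rule real_sqrt_le_mono)
  then show ?thesis by simp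
qed

lemma lesnick_vertices_mono:
  assumes "finite Y" "X \<subseteq> Y" "s \<le> t"
  shows "lesnick_vertices s k X \<subseteq> lesnick_vertices t k Y"
proof
  fix x assume x: "x \<in> lesnick_vertices s k X"
  have "card {x'\<in>X. x' \<noteq> x \<and> dist x x' \<le> s} \<le> card {x'\<in>Y. x' \<noteq> x \<and> dist x x' \<le> t}"
    using assms by (intro card_mono) auto
  with x assms show "x \<in> lesnick_vertices t k Y"
    unfolding lesnick_vertices_def by auto
qed

lemma lesnick_vertices_subset: "lesnick_vertices s k X \<subseteq> X"
  unfolding lesnick_vertices_def by auto

lemma mem_lesnick:
  "\<sigma> \<in> lesnick s k X \<longleftrightarrow>
     \<sigma> \<noteq> {} \<and> \<sigma> \<subseteq> lesnick_vertices s k X \<and> (\<forall>x\<in>\<sigma>. \<forall>y\<in>\<sigma>. dist x y \<le> s)"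
  using lesnick_vertices_subset unfolding lesnick_def vietoris_rips_def by blast

lemma lesnick_subset_closed:
  assumes "\<tau> \<subseteq> \<rho>" "\<tau> \<noteq> {}" "\<rho> \<in> lesnick s k X"
  shows "\<tau> \<in> lesnick s k X"
  using assms unfolding mem_lesnick by blast

lemma finite_vertices_lesnick:
  assumes "finite X"
  shows "finite (vertices (lesnick s k X))"
proof -
  have "\<sigma> \<subseteq> X" if "\<sigma> \<in> lesnick s k X" for \<sigma>
    using that lesnick_vertices_subset unfolding mem_lesnick by blast
  then have "vertices (lesnick s k X) \<subseteq> X"
    unfolding vertices_def by blast
  then show ?thesis using assms finite_subset by blast
qed

lemma ex_close_lesnick_vertex:
  assumes "finite Y" "X \<subseteq> Y"
    and dense: "r_dense_tuples r (dis_tuples X k) (dis_tuples Y k)"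
    and y: "y \<in> lesnick_vertices s k Y"
  shows "\<exists>x\<in>lesnick_vertices (s + 2*r) k X. dist x y < r"
proof -
  let ?N = "{y'\<in>Y. y' \<noteq> y \<and> dist y y' \<le> s}"
  have "card ?N \<ge> k" using y unfolding lesnick_vertices_def by auto
  then obtain A where A: "A \<subseteq> ?N" "card A = k"
    by (rule obtain_subset_with_card_n)
  then have "finite A" using assms(1) finite_subset[of A Y] by auto
  then obtain ys where ys: "set ys = A" "distinct ys" using finite_distinct_list by blast
  have lys: "length ys = k" using distinct_card[OF ys(2)] ys(1) A(2) by simp
  have "y \<in> Y" using y unfolding lesnick_vertices_def by auto
  with ys lys A have "y # ys \<in> dis_tuples Y k"
    unfolding dis_tuples_def by auto
  then obtain a where a: "a \<in> dis_tuples X k" "tuple_dist a (y # ys) < r"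
    using dense unfolding r_dense_tuples_def by blast
  have la: "length a = k + 1" and da: "distinct a" and sa: "set a \<subseteq> X"
    using a(1) unfolding dis_tuples_def by auto
  have close: "dist (a!i) ((y#ys)!i) < r" if "i \<le> k" for i
    using dist_nth_le_tuple_dist[of i a "y#ys"] a(2) la that by simp
  define x where "x = a!0"
  have dxy: "dist x y < r" using close[of 0] x_def by simp
  have xX: "x \<in> X" unfolding x_def using la sa nth_mem[of 0 a] by auto
  let ?M = "{x'\<in>X. x' \<noteq> x \<and> dist x x' \<le> s + 2*r}"
  have "a ! Suc j \<in> ?M" if j: "j < k" for j
  proof -
    have "ys ! j \<in> A" using ys(1) lys j by auto
    then have "dist y (ys!j) \<le> s" using A(1) by blast
    moreover have "dist (a ! Suc j) (ys!j) < r" using close[of "Suc j"] j by simp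
    ultimately have "dist x (a ! Suc j) \<le> s + 2*r"
      using dist_triangle[of x "a ! Suc j" y] dist_triangle[of y "a ! Suc j" "ys!j"] dxy
      by (simp add: dist_commute)
    moreover have "a ! Suc j \<noteq> x"
      using da la j unfolding x_def by (simp add: nth_eq_iff_index_eq)
    moreover have "a ! Suc j \<in> X" using sa la j nth_mem[of "Suc j" a] by auto
    ultimately show ?thesis by blast
  qed
  moreover have "set (tl a) = (\<lambda>j. a ! Suc j) ` {..<k}"
    using la by (force simp: in_set_conv_nth nth_tl image_iff)
  ultimately have "set (tl a) \<subseteq> ?M" by auto
  moreover have "card (set (tl a)) = k"
    using distinct_card[OF distinct_tl[OF da]] la by simp
  moreover have "finite ?M" using assms(1,2) finite_subset[of _ Y] by auto
  ultimately have "card ?M \<ge> k" by (metis card_mono)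
  then have "x \<in> lesnick_vertices (s + 2*r) k X" using xX unfolding lesnick_vertices_def by blast
  with dxy show ?thesis by blast
qed

lemma obtain_lesnick_vertex_map:
  assumes "finite Y" "X \<subseteq> Y" "r > 0"
    and "r_dense_tuples r (dis_tuples X k) (dis_tuples Y k)"
  obtains \<theta> where "\<And>x. x \<in> lesnick_vertices s k X \<Longrightarrow> \<theta> x = x"
    and "\<And>y. y \<in> lesnick_vertices s k Y \<Longrightarrow> \<theta> y \<in> lesnick_vertices (s + 2*r) k X \<and> dist (\<theta> y) y < r"
proof
  define \<theta> where "\<theta> y = (if y \<in> lesnick_vertices s k X then y
      else SOME x. x \<in> lesnick_vertices (s + 2*r) k X \<and> dist x y < r)" for y
  show "\<theta> x = x" if "x \<in> lesnick_vertices s k X" for x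
    using that unfolding \<theta>_def by simp
  show "\<theta> y \<in> lesnick_vertices (s + 2*r) k X \<and> dist (\<theta> y) y < r"
    if y: "y \<in> lesnick_vertices s k Y" for y
  proof (cases "y \<in> lesnick_vertices s k X")
    case True
    have "finite X" using assms(1,2) finite_subset by blast
    then have "lesnick_vertices s k X \<subseteq> lesnick_vertices (s + 2*r) k X"
      using assms(3) by (intro lesnick_vertices_mono) auto
    with True assms(3) show ?thesis unfolding \<theta>_def by auto
  next
    case False
    have "\<exists>x. x \<in> lesnick_vertices (s + 2*r) k X \<and> dist x y < r"
      using ex_close_lesnick_vertex[OF assms(1,2,4) y] by blast
    from someI_ex[OF this] False show ?thesis unfolding \<theta>_def by simp
  qed
qed

lemma lesnick_perturbed_simplex:
  assumes "finite Y" "X \<subseteq> Y" "r \<ge> 0" and \<sigma>: "\<sigma> \<in> lesnick s k Y"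
    and \<theta>: "\<And>y. y \<in> \<sigma> \<Longrightarrow> \<theta> y \<in> lesnick_vertices (s + 2*r) k X \<and> dist (\<theta> y) y < r"
  shows "\<theta> ` \<sigma> \<in> lesnick (s + 2*r) k X" and "\<sigma> \<union> \<theta> ` \<sigma> \<in> lesnick (s + 2*r) k Y"
proof -
  have diam: "\<forall>x\<in>\<sigma>. \<forall>y\<in>\<sigma>. dist x y \<le> s" and "\<sigma> \<noteq> {}"
    and \<sigma>_vertices: "\<sigma> \<subseteq> lesnick_vertices s k Y"
    using \<sigma> unfolding mem_lesnick by auto
  have "dist (\<theta> x) (\<theta> y) \<le> s + 2*r" "dist (\<theta> x) y \<le> s + 2*r" "dist x y \<le> s + 2*r"
    if "x \<in> \<sigma>" "y \<in> \<sigma>" for x y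
  proof -
    have "dist x y \<le> s" "dist (\<theta> x) x < r" "dist (\<theta> y) y < r"
      using that diam \<theta> by auto
    then show "dist (\<theta> x) (\<theta> y) \<le> s + 2*r" "dist (\<theta> x) y \<le> s + 2*r" "dist x y \<le> s + 2*r"
      using assms(3) dist_triangle[of "\<theta> x" "\<theta> y" x] dist_triangle[of x "\<theta> y" y]
        dist_triangle[of "\<theta> x" y x]
      by (simp_all add: dist_commute)
  qed
  then have diam': "\<forall>x\<in>\<sigma> \<union> \<theta> ` \<sigma>. \<forall>y\<in>\<sigma> \<union> \<theta> ` \<sigma>. dist x y \<le> s + 2*r"
    by (auto simp: dist_commute)
  have image_vertices: "\<theta> ` \<sigma> \<subseteq> lesnick_vertices (s + 2*r) k X" using \<theta> by auto
  with diam' \<open>\<sigma> \<noteq> {}\<close> show "\<theta> ` \<sigma> \<in> lesnick (s + 2*r) k X"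
    unfolding mem_lesnick by blast
  have "\<sigma> \<subseteq> lesnick_vertices (s + 2*r) k Y"
    using \<sigma>_vertices lesnick_vertices_mono[OF assms(1) order_refl, of s "s + 2*r" k] assms(3)
    by auto
  moreover have "\<theta> ` \<sigma> \<subseteq> lesnick_vertices (s + 2*r) k Y"
    using image_vertices lesnick_vertices_mono[OF assms(1,2), of "s + 2*r" "s + 2*r" k] by auto
  ultimately show "\<sigma> \<union> \<theta> ` \<sigma> \<in> lesnick (s + 2*r) k Y"
    using diam' \<open>\<sigma> \<noteq> {}\<close> unfolding mem_lesnick by blast
qed

lemma real_map_eq_sum_support:
  assumes "finite V" "{x. f x \<noteq> 0} \<subseteq> V"
  shows "real_map V g f y = sum f {x. f x \<noteq> 0 \<and> g x = y}"
  unfolding real_map_def using assms by (intro sum.mono_neutral_right) auto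

lemma real_map_nonneg: "(\<And>x. f x \<ge> 0) \<Longrightarrow> real_map V g f y \<ge> 0"
  unfolding real_map_def by (simp add: sum_nonneg)

lemma real_map_eq_0_outside_image:
  assumes "finite V" "{x. f x \<noteq> 0} \<subseteq> V" "y \<notin> g ` {x. f x \<noteq> 0}"
  shows "real_map V g f y = 0"
proof -
  have no_preimage: "{x. f x \<noteq> 0 \<and> g x = y} = {}" using assms(3) by auto
  show ?thesis by (simp add: real_map_eq_sum_support[OF assms(1,2)] no_preimage)
qed

lemma sum_real_map:
  assumes "finite V" "{x. f x \<noteq> 0} \<subseteq> V" "finite S" "g ` {x. f x \<noteq> 0} \<subseteq> S"
  shows "sum (real_map V g f) S = sum f {x. f x \<noteq> 0}"
proof -
  let ?\<sigma> = "{x. f x \<noteq> 0}"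
  have "finite ?\<sigma>" using assms(1,2) finite_subset by blast
  then have "sum f ?\<sigma> = (\<Sum>y\<in>g ` ?\<sigma>. sum f {x\<in>?\<sigma>. g x = y})"
    by (rule sum.image_gen)
  also have "\<dots> = (\<Sum>y\<in>S. sum f {x\<in>?\<sigma>. g x = y})"
    using assms(4) by (intro sum.mono_neutral_left[OF assms(3)]) (auto intro!: sum.neutral)
  also have "\<dots> = sum (real_map V g f) S"
    by (simp add: real_map_eq_sum_support[OF assms(1,2)])
  finally show ?thesis by simp
qed

lemma convex_combination_real_maps_in_geom_carrier:
  assumes "finite (vertices K)" and f: "f \<in> geom_carrier K" and t: "t \<in> {0..1}"
    and contiguous: "\<And>\<sigma>. \<sigma> \<in> K \<Longrightarrow> g ` \<sigma> \<union> h ` \<sigma> \<in> L"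
    and subset_closed: "\<And>\<tau> \<rho>. \<lbrakk>\<tau> \<subseteq> \<rho>; \<tau> \<noteq> {}; \<rho> \<in> L\<rbrakk> \<Longrightarrow> \<tau> \<in> L"
  shows "(\<lambda>y. (1 - t) * real_map (vertices K) g f y + t * real_map (vertices K) h f y)
           \<in> geom_carrier L"
    (is "?c \<in> _")
proof -
  define \<sigma> where "\<sigma> = {x. f x \<noteq> 0}"
  define S where "S = g ` \<sigma> \<union> h ` \<sigma>"
  have f_nonneg: "\<And>x. f x \<ge> 0" and "\<sigma> \<in> K" and "sum f \<sigma> = 1"
    using f unfolding geom_carrier_def \<sigma>_def by auto
  have \<sigma>_vertices: "\<sigma> \<subseteq> vertices K" using \<open>\<sigma> \<in> K\<close> unfolding vertices_def by auto
  have "finite S" using \<sigma>_vertices assms(1) finite_subset unfolding S_def by blast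
  note rm = real_map_eq_0_outside_image[OF assms(1) \<sigma>_vertices[unfolded \<sigma>_def]]
    sum_real_map[OF assms(1) \<sigma>_vertices[unfolded \<sigma>_def] \<open>finite S\<close>]
  have "?c y = 0" if "y \<notin> S" for y
    using that rm(1)[of y g] rm(1)[of y h] unfolding S_def \<sigma>_def by simp
  then have support: "{y. ?c y \<noteq> 0} \<subseteq> S" by blast
  have "sum ?c S = (1 - t) * sum f \<sigma> + t * sum f \<sigma>"
    using rm(2)[of g] rm(2)[of h]
    by (simp add: sum.distrib sum_distrib_left[symmetric] S_def \<sigma>_def)
  then have "sum ?c S = 1" using \<open>sum f \<sigma> = 1\<close> by (simp add: algebra_simps)
  moreover have "sum ?c {y. ?c y \<noteq> 0} = sum ?c S"
    using support by (intro sum.mono_neutral_left[OF \<open>finite S\<close>]) auto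
  ultimately have sum_c: "sum ?c {y. ?c y \<noteq> 0} = 1" by simp
  then have "{y. ?c y \<noteq> 0} \<noteq> {}" by (metis sum.empty zero_neq_one)
  with support have "{y. ?c y \<noteq> 0} \<in> L"
    using subset_closed contiguous[OF \<open>\<sigma> \<in> K\<close>] unfolding S_def by blast
  moreover have "?c y \<ge> 0" for y
    using t real_map_nonneg[of f, OF f_nonneg] by (auto intro!: add_nonneg_nonneg mult_nonneg_nonneg)
  ultimately show ?thesis
    using sum_c unfolding geom_carrier_def by auto
qed

lemma continuous_map_real_map_apply:
  assumes "finite V"
  shows "continuous_map (geom_real K) euclideanreal (\<lambda>f. real_map V g f y)"
proof -
  have "continuous_map (geom_real K) euclideanreal (\<lambda>f. f x)" for x
    unfolding geom_real_def
    by (intro continuous_map_from_subtopology continuous_map_product_projection) simp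
  then show ?thesis
    unfolding real_map_def using assms by (intro continuous_map_sum) auto
qed

lemma contiguous_real_maps_homotopic:
  assumes "finite (vertices K)"
    and contiguous: "\<And>\<sigma>. \<sigma> \<in> K \<Longrightarrow> g ` \<sigma> \<union> h ` \<sigma> \<in> L"
    and subset_closed: "\<And>\<tau> \<rho>. \<lbrakk>\<tau> \<subseteq> \<rho>; \<tau> \<noteq> {}; \<rho> \<in> L\<rbrakk> \<Longrightarrow> \<tau> \<in> L"
  shows "homotopic_with (\<lambda>_. True) (geom_real K) (geom_real L)
           (real_map (vertices K) g) (real_map (vertices K) h)"
proof -
  define V where "V = vertices K"
  define H where "H p = (\<lambda>y. (1 - fst p) * real_map V g (snd p) y + fst p * real_map V h (snd p) y)"
    for p :: "real \<times> ('a \<Rightarrow> real)"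
  have real_map_cont: "continuous_map (prod_topology (top_of_set {0..1}) (geom_real K)) euclideanreal
          (\<lambda>p. real_map V g' (snd p) y)" for g' :: "'a \<Rightarrow> 'b" and y
    using continuous_map_compose[OF continuous_map_snd continuous_map_real_map_apply[OF assms(1)]]
    unfolding V_def o_def .
  have fst_cont: "continuous_map (prod_topology (top_of_set {0..1}) (geom_real K)) euclideanreal fst"
    using continuous_map_fst continuous_map_into_fulltopology by blast
  have "continuous_map (prod_topology (top_of_set {0..1}) (geom_real K)) (powertop_real UNIV) H"
    unfolding continuous_map_componentwise_UNIV H_def
    by (intro allI continuous_intros fst_cont real_map_cont)
  moreover have "H \<in> topspace (prod_topology (top_of_set {0..1}) (geom_real K)) \<rightarrow> geom_carrier L"
    using convex_combination_real_maps_in_geom_carrier[OF assms(1) _ _ contiguous subset_closed]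
    by (auto simp: H_def V_def geom_real_def)
  ultimately have "continuous_map (prod_topology (top_of_set {0..1}) (geom_real K)) (geom_real L) H"
    unfolding geom_real_def[of L] by (simp add: continuous_map_in_subtopology)
  then show ?thesis
    unfolding homotopic_with_def V_def[symmetric] by (intro exI[of _ H] conjI) (auto simp: H_def)
qed

theorem theorem3:
  fixes X Y :: "(real ^ 'n) set" and k :: nat and r s :: real
  assumes "finite Y" and "X \<subseteq> Y" and "r > 0" and "s \<ge> 0"
    and "r_dense_tuples r (dis_tuples X k) (dis_tuples Y k)"
    and "lesnick s k Y \<noteq> {}"
  shows "\<exists>\<theta>. simplicial_map (lesnick s k Y) (lesnick (s + 2 * r) k X) \<theta>
          \<and> (\<forall>x\<in>vertices (lesnick s k X). \<theta> x = x)
          \<and> homotopic_with (\<lambda>_. True) (geom_real (lesnick s k Y)) (geom_real (lesnick (s + 2 * r) k Y))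
              (real_map (vertices (lesnick s k Y)) \<theta>) (real_map (vertices (lesnick s k Y)) id)"
proof -
  obtain \<theta> where fix_X: "\<And>x. x \<in> lesnick_vertices s k X \<Longrightarrow> \<theta> x = x"
    and close: "\<And>y. y \<in> lesnick_vertices s k Y \<Longrightarrow>
                  \<theta> y \<in> lesnick_vertices (s + 2*r) k X \<and> dist (\<theta> y) y < r"
    using obtain_lesnick_vertex_map[OF assms(1,2,3,5)] by blast
  have perturbed: "\<theta> ` \<sigma> \<in> lesnick (s + 2*r) k X" "\<sigma> \<union> \<theta> ` \<sigma> \<in> lesnick (s + 2*r) k Y"
    if "\<sigma> \<in> lesnick s k Y" for \<sigma>
    using lesnick_perturbed_simplex[OF assms(1,2) less_imp_le[OF assms(3)] that] close that
    unfolding mem_lesnick by blast+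
  have "simplicial_map (lesnick s k Y) (lesnick (s + 2 * r) k X) \<theta>"
    unfolding simplicial_map_def using perturbed(1) by blast
  moreover have "\<forall>x\<in>vertices (lesnick s k X). \<theta> x = x"
    using fix_X unfolding vertices_def lesnick_def by blast
  moreover have "homotopic_with (\<lambda>_. True) (geom_real (lesnick s k Y))
      (geom_real (lesnick (s + 2 * r) k Y))
      (real_map (vertices (lesnick s k Y)) \<theta>) (real_map (vertices (lesnick s k Y)) id)"
  proof (rule contiguous_real_maps_homotopic[OF finite_vertices_lesnick[OF assms(1)]])
    show "\<theta> ` \<sigma> \<union> id ` \<sigma> \<in> lesnick (s + 2 * r) k Y" if "\<sigma> \<in> lesnick s k Y" for \<sigma>
      using perturbed(2)[OF that] by (simp add: Un_commute)
  qed (rule lesnick_subset_closed)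
  ultimately show ?thesis by blast
qed

end
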